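(* Suppose that (i) for every $j=1,\dots,J$, $\eta\mapsto h_j(Z_j,\theta_0,\eta)$, $\mathbf B\to L^2(Z_j)$, is Fréchet differentiable in a neighborhood of $\eta_0$ with derivative $b\mapsto S^{(j)}_{\theta_0,\eta_0}b$; (ii) for all $j$ there is a function $\nu_j$, known up to $(\theta_0,\eta_0)$, with $[S^{(j)}_{\theta_0,\eta_0}b](Z_j)=E[\nu_j(Y,\theta_0,\eta_0,b)\mid Z_j]$ for all $b\in\mathbf B$, and $\nu_j(Y,\theta_0,\eta_0,b)=b(V)'\tilde\nu_j(Y,\theta_0,\eta_0)$ for some $d_\eta$-vector $\tilde\nu_j$ of functions known up to $(\theta_0,\eta_0)$. Let $\langle b_1,b_2\rangle_{\mathbf B}=E[b_1(V)'b_2(V)]$. Then the adjoint $S^*_{\theta_0,\eta_0}:L^2(Z)\to\mathbf B$ of $S_{\theta_0,\eta_0}b=(S^{(1)}_{\theta_0,\eta_0}b,\dots,S^{(J)}_{\theta_0,\eta_0}b)$ exists, is linear and continuous, and is given by $[S^*_{\theta_0,\eta_0}g](V)=\sum_{j=1}^JE[\tilde\nu_j(Y,\theta_0,\eta_0)g_j(Z_j)\mid V]$ for $g=(g_1,\dots,g_J)\in L^2(Z)$.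
   Context: $W=(Y,V,Z)$ is a random vector; $Z$ collects the distinct elements of conditioning vectors $Z_1,\dots,Z_J$. $\eta\in\mathbf B\subseteq\bigotimes^{d_\eta}L^2(V)$, a Hilbert space; $\theta\in\Theta\subset\mathbb R^{d_\theta}$. Residual functions $m_j(Y,\theta,\eta)$ satisfy $E[m_j(Y,\theta_0,\eta_0)\mid Z_j]=0$ a.s., and $h_j(Z_j,\theta,\eta)=E[m_j(Y,\theta,\eta)\mid Z_j]$. $L^2(Z)=\bigotimes_{j=1}^JL^2(Z_j)$ with inner product $\langle f,g\rangle_{L^2(Z)}=\sum_jE[f_j(Z_j)g_j(Z_j)]$. The adjoint satisfies $\langle S b,g\rangle_{L^2(Z)}=\langle b,S^*g\rangle_{\mathbf B}$. *)

theory Defs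
  imports "HOL-Probability.Probability"
begin

definition sigma_gen :: "'a measure \<Rightarrow> ('a \<Rightarrow> 'b) \<Rightarrow> 'b measure \<Rightarrow> 'a measure" where
  "sigma_gen M X N = vimage_algebra (space M) X N"

definition cond_exp_given :: "'a measure \<Rightarrow> ('a \<Rightarrow> 'b) \<Rightarrow> 'b measure \<Rightarrow> ('a \<Rightarrow> real) \<Rightarrow> 'a \<Rightarrow> real" where
  "cond_exp_given M X N f = real_cond_exp M (sigma_gen M X N) f"

definition L2_of :: "'a measure \<Rightarrow> ('a \<Rightarrow> 'b) \<Rightarrow> 'b measure \<Rightarrow> ('b \<Rightarrow> 'c::euclidean_space) \<Rightarrow> bool" where
  "L2_of M X N f \<longleftrightarrow> f \<in> borel_measurable N \<and> integrable M (\<lambda>\<omega>. (norm (f (X \<omega>)))\<^sup>2)"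

definition L2_norm_of :: "'a measure \<Rightarrow> ('a \<Rightarrow> 'b) \<Rightarrow> ('b \<Rightarrow> 'c::euclidean_space) \<Rightarrow> real" where
  "L2_norm_of M X f = sqrt (\<integral>\<omega>. (norm (f (X \<omega>)))\<^sup>2 \<partial>M)"

definition bounded_linear_L2 ::
  "'a measure \<Rightarrow> ('a \<Rightarrow> 'v) \<Rightarrow> 'v measure \<Rightarrow> ('a \<Rightarrow> 'z) \<Rightarrow> 'z measure
   \<Rightarrow> (('v \<Rightarrow> real^'d) \<Rightarrow> ('z \<Rightarrow> real)) \<Rightarrow> bool" where
  "bounded_linear_L2 M V MV Z MZ D \<longleftrightarrow>
     (\<forall>b. L2_of M V MV b \<longrightarrow> L2_of M Z MZ (D b)) \<and>
     (\<forall>b1 b2 (a::real) c. L2_of M V MV b1 \<longrightarrow> L2_of M V MV b2 \<longrightarrow>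
        (AE \<omega> in M. D (\<lambda>v. a *\<^sub>R b1 v + c *\<^sub>R b2 v) (Z \<omega>) = a * D b1 (Z \<omega>) + c * D b2 (Z \<omega>))) \<and>
     (\<exists>C. \<forall>b. L2_of M V MV b \<longrightarrow> L2_norm_of M Z (D b) \<le> C * L2_norm_of M V b)"

definition frechet_L2 ::
  "'a measure \<Rightarrow> ('a \<Rightarrow> 'v) \<Rightarrow> 'v measure \<Rightarrow> ('a \<Rightarrow> 'z) \<Rightarrow> 'z measure
   \<Rightarrow> (('v \<Rightarrow> real^'d) \<Rightarrow> ('z \<Rightarrow> real)) \<Rightarrow> ('v \<Rightarrow> real^'d)
   \<Rightarrow> (('v \<Rightarrow> real^'d) \<Rightarrow> ('z \<Rightarrow> real)) \<Rightarrow> bool" where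
  "frechet_L2 M V MV Z MZ h \<eta> D \<longleftrightarrow>
     bounded_linear_L2 M V MV Z MZ D \<and>
     (\<forall>\<epsilon>>0. \<exists>\<delta>>0. \<forall>b. L2_of M V MV b \<longrightarrow> L2_norm_of M V b < \<delta> \<longrightarrow>
        L2_norm_of M Z (\<lambda>z. h (\<lambda>v. \<eta> v + b v) z - h \<eta> z - D b z) \<le> \<epsilon> * L2_norm_of M V b)"

end

theory Submission
  imports Defs
begin

text \<open>
  Put \<open>S\<^sup>* g = \<Sum>\<^sub>j \<phi>\<^sub>j\<close> with \<open>\<phi>\<^sub>j(V) = E[\<nu>\<^sub>j(Y) g\<^sub>j(Z\<^sub>j) | V]\<close>; by the Doob--Dynkin lemma such a
  \<open>\<phi>\<^sub>j\<close> exists as a function of \<open>V\<close>. For bounded \<open>b\<close>, conditioning first on \<open>Z\<^sub>j\<close> and then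
  on \<open>V\<close> gives \<open>E[(S\<^sub>j b)(Z\<^sub>j) g\<^sub>j(Z\<^sub>j)] = E[b(V)'\<nu>\<^sub>j(Y) g\<^sub>j(Z\<^sub>j)] = E[b(V)'\<phi>\<^sub>j(V)]\<close>.
  Choosing for \<open>b\<close> a truncation \<open>t\<close> of \<open>\<phi>\<^sub>j\<close> itself yields
  \<open>\<parallel>t\<parallel>\<^sup>2 \<le> \<parallel>S\<^sub>j\<parallel> \<parallel>t\<parallel> \<parallel>g\<^sub>j\<parallel>\<close>, so by monotone convergence \<open>\<phi>\<^sub>j \<in> L\<^sup>2(V)\<close> with
  \<open>\<parallel>\<phi>\<^sub>j\<parallel> \<le> \<parallel>S\<^sub>j\<parallel> \<parallel>g\<^sub>j\<parallel>\<close>. Both sides of the identity are continuous in \<open>b \<in> L\<^sup>2(V)\<close>, so it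
  extends from truncations to all of \<open>\<B>\<close>. Linearity of \<open>S\<^sup>*\<close> is that of conditional expectation.
\<close>

section \<open>Measurability\<close>

lemma borel_measurable_vimage_algebra_factor_nonneg:
  fixes u :: "'a \<Rightarrow> real"
  assumes "u \<in> borel_measurable (vimage_algebra X V N)" "\<And>x. 0 \<le> u x" and V: "V \<in> X \<rightarrow> space N"
  shows "\<exists>\<phi>\<in>borel_measurable N. \<forall>x\<in>X. u x = \<phi> (V x)"
  using assms(1,2)
proof (induction u rule: borel_measurable_induct_real)
  case (set A)
  then obtain B where "B \<in> sets N" "A = V -` B \<inter> X"
    using sets_vimage_algebra2[OF V] by auto
  then show ?case
    by (intro bexI[of _ "indicator B"]) (auto simp: indicator_def)
next
  case (mult u c)
  then obtain \<phi> where "\<phi> \<in> borel_measurable N" "\<forall>x\<in>X. u x = \<phi> (V x)" by blast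
  then show ?case by (intro bexI[of _ "\<lambda>v. c * \<phi> v"]) auto
next
  case (add u w)
  then obtain \<phi> \<psi> where "\<phi> \<in> borel_measurable N" "\<forall>x\<in>X. u x = \<phi> (V x)"
    and "\<psi> \<in> borel_measurable N" "\<forall>x\<in>X. w x = \<psi> (V x)" by metis
  then show ?case by (intro bexI[of _ "\<lambda>v. \<psi> v + \<phi> v"]) auto
next
  case (seq U)
  then obtain \<phi> where \<phi>: "\<And>i. \<phi> i \<in> borel_measurable N" "\<And>i x. x \<in> X \<Longrightarrow> U i x = \<phi> i (V x)"
    by metis
  have "u x = lim (\<lambda>i. \<phi> i (V x))" if "x \<in> X" for x
    using seq.hyps(4)[of x] \<phi>(2)[OF that] that by (simp add: limI)
  moreover have "(\<lambda>v. lim (\<lambda>i. \<phi> i v)) \<in> borel_measurable N"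
    using \<phi>(1) by (rule borel_measurable_lim_metric)
  ultimately show ?case by (intro bexI[of _ "\<lambda>v. lim (\<lambda>i. \<phi> i v)"]) auto
qed

lemma borel_measurable_vimage_algebra_factor:
  fixes f :: "'a \<Rightarrow> real"
  assumes f: "f \<in> borel_measurable (vimage_algebra X V N)" and V: "V \<in> X \<rightarrow> space N"
  shows "\<exists>\<phi>\<in>borel_measurable N. \<forall>x\<in>X. f x = \<phi> (V x)"
proof -
  have "\<exists>\<phi>\<in>borel_measurable N. \<forall>x\<in>X. max (f x) 0 = \<phi> (V x)"
    by (rule borel_measurable_vimage_algebra_factor_nonneg[OF _ _ V]) (use f in auto)
  then obtain \<phi> where \<phi>: "\<phi> \<in> borel_measurable N" "\<forall>x\<in>X. max (f x) 0 = \<phi> (V x)" ..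
  have "\<exists>\<psi>\<in>borel_measurable N. \<forall>x\<in>X. max (- f x) 0 = \<psi> (V x)"
    by (rule borel_measurable_vimage_algebra_factor_nonneg[OF _ _ V]) (use f in auto)
  then obtain \<psi> where \<psi>: "\<psi> \<in> borel_measurable N" "\<forall>x\<in>X. max (- f x) 0 = \<psi> (V x)" ..
  have "f x = \<phi> (V x) - \<psi> (V x)" if "x \<in> X" for x
    using \<phi>(2)[rule_format, OF that] \<psi>(2)[rule_format, OF that] by linarith
  then show ?thesis
    using \<phi>(1) \<psi>(1) by (intro bexI[of _ "\<lambda>v. \<phi> v - \<psi> v"]) auto
qed

lemma sigma_finite_subalgebra_sigma_gen:
  assumes "prob_space M" and "X \<in> M \<rightarrow>\<^sub>M N"
  shows "sigma_finite_subalgebra M (sigma_gen M X N)"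
proof (rule finite_measure_subalgebra_is_sigma_finite)
  interpret prob_space M by fact
  show "finite_measure_subalgebra M (sigma_gen M X N)"
    using sets_image_in_sets[of M "space M" X N] assms(2) finite_measure_axioms
    by (simp add: finite_measure_subalgebra_def finite_measure_subalgebra_axioms_def
        subalgebra_def sigma_gen_def)
qed

lemma borel_measurable_sigma_gen_comp:
  assumes "X \<in> M \<rightarrow>\<^sub>M N" and "f \<in> borel_measurable N"
  shows "(\<lambda>\<omega>. f (X \<omega>)) \<in> borel_measurable (sigma_gen M X N)"
proof -
  have "X \<in> sigma_gen M X N \<rightarrow>\<^sub>M N"
    unfolding sigma_gen_def using measurable_space[OF assms(1)] by (intro measurable_vimage_algebra1) blast
  then show ?thesis using assms(2) by measurable
qed

lemma borel_measurable_vec_nth [measurable (raw)]: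
  fixes f :: "'a \<Rightarrow> real^'n"
  shows "f \<in> borel_measurable M \<Longrightarrow> (\<lambda>x. f x $ i) \<in> borel_measurable M"
  by (rule measurable_compose[OF _ borel_measurable_nth])

lemma borel_measurable_vec_lambda:
  fixes \<phi> :: "'d::finite \<Rightarrow> 'v \<Rightarrow> real"
  assumes "\<And>k. \<phi> k \<in> borel_measurable N"
  shows "(\<lambda>v. \<chi> k. \<phi> k v) \<in> borel_measurable N"
proof -
  have "(\<lambda>v. \<Sum>k\<in>UNIV. \<phi> k v *\<^sub>R (axis k 1 :: real^'d)) \<in> borel_measurable N"
    using assms by (intro borel_measurable_sum borel_measurable_scaleR) auto
  moreover have "(\<Sum>k\<in>UNIV. \<phi> k v *\<^sub>R (axis k 1 :: real^'d)) = (\<chi> k. \<phi> k v)" for v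
    by (simp add: vec_eq_iff axis_def if_distrib cong: if_cong)
  ultimately show ?thesis by simp
qed

section \<open>Square integrable functions of a random element\<close>

lemma
  fixes f g :: "'a \<Rightarrow> 'c::euclidean_space"
  assumes [measurable]: "f \<in> borel_measurable M" "g \<in> borel_measurable M"
    and f2: "integrable M (\<lambda>x. (norm (f x))\<^sup>2)" and g2: "integrable M (\<lambda>x. (norm (g x))\<^sup>2)"
  shows integrable_inner_square_integrable: "integrable M (\<lambda>x. f x \<bullet> g x)"
    and abs_integral_inner_le:
      "\<bar>\<integral>x. f x \<bullet> g x \<partial>M\<bar> \<le> sqrt (\<integral>x. (norm (f x))\<^sup>2 \<partial>M) * sqrt (\<integral>x. (norm (g x))\<^sup>2 \<partial>M)"
proof -
  have inner_le: "\<bar>x \<bullet> y\<bar> \<le> norm x * norm y" "norm x * norm y \<le> (norm x)\<^sup>2 + (norm y)\<^sup>2"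
    for x y :: 'c
    using Cauchy_Schwarz_ineq2[of x y] sum_squares_bound[of "norm x" "norm y"]
      zero_le_mult_iff[of "norm x" "norm y"] by auto
  have fg: "integrable M (\<lambda>x. norm (f x) * norm (g x))"
    by (rule Bochner_Integration.integrable_bound[OF Bochner_Integration.integrable_add[OF f2 g2]])
       (use inner_le(2) in auto)
  show inner: "integrable M (\<lambda>x. f x \<bullet> g x)"
    by (rule Bochner_Integration.integrable_bound[OF fg]) (use inner_le(1) in auto)
  have "ennreal ((\<integral>x. norm (f x) * norm (g x) \<partial>M)\<^sup>2)
      = (\<integral>\<^sup>+x. ennreal (norm (f x)) * ennreal (norm (g x)) \<partial>M)\<^sup>2"
    using fg by (simp add: ennreal_mult''[symmetric] nn_integral_eq_integral ennreal_power integral_nonneg_AE)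
  also have "\<dots> \<le> (\<integral>\<^sup>+x. ennreal (norm (f x)) ^ 2 \<partial>M) * (\<integral>\<^sup>+x. ennreal (norm (g x)) ^ 2 \<partial>M)"
    by (rule Cauchy_Schwarz_nn_integral) measurable
  also have "\<dots> = ennreal ((\<integral>x. (norm (f x))\<^sup>2 \<partial>M) * (\<integral>x. (norm (g x))\<^sup>2 \<partial>M))"
    using f2 g2 by (simp add: ennreal_power nn_integral_eq_integral ennreal_mult integral_nonneg_AE)
  finally have "(\<integral>x. norm (f x) * norm (g x) \<partial>M)\<^sup>2 \<le> (\<integral>x. (norm (f x))\<^sup>2 \<partial>M) * (\<integral>x. (norm (g x))\<^sup>2 \<partial>M)"
    by (simp add: integral_nonneg_AE)
  then have "(\<integral>x. norm (f x) * norm (g x) \<partial>M) \<le> sqrt (\<integral>x. (norm (f x))\<^sup>2 \<partial>M) * sqrt (\<integral>x. (norm (g x))\<^sup>2 \<partial>M)"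
    by (metis real_le_rsqrt real_sqrt_mult)
  moreover have "\<bar>\<integral>x. f x \<bullet> g x \<partial>M\<bar> \<le> (\<integral>x. norm (f x) * norm (g x) \<partial>M)"
    by (rule order_trans[OF integral_abs_bound integral_mono]) (use fg inner inner_le(1) in auto)
  ultimately show "\<bar>\<integral>x. f x \<bullet> g x \<partial>M\<bar> \<le> sqrt (\<integral>x. (norm (f x))\<^sup>2 \<partial>M) * sqrt (\<integral>x. (norm (g x))\<^sup>2 \<partial>M)"
    by linarith
qed

lemma L2_norm_of_nonneg: "0 \<le> L2_norm_of M X f"
  unfolding L2_norm_of_def by (auto intro!: integral_nonneg_AE)

lemma L2_norm_of_power2: "(L2_norm_of M X f)\<^sup>2 = (\<integral>\<omega>. (norm (f (X \<omega>)))\<^sup>2 \<partial>M)"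
  unfolding L2_norm_of_def by (auto intro!: integral_nonneg_AE)

lemma borel_measurable_L2_of_comp:
  assumes "L2_of M X N f" and "X \<in> M \<rightarrow>\<^sub>M N"
  shows "(\<lambda>\<omega>. f (X \<omega>)) \<in> borel_measurable M"
  using measurable_comp[OF assms(2), of f] assms(1) by (simp add: L2_of_def o_def)

lemma
  assumes f: "L2_of M X N f" and g: "L2_of M X' N' g"
    and X: "X \<in> M \<rightarrow>\<^sub>M N" and X': "X' \<in> M \<rightarrow>\<^sub>M N'"
  shows L2_of_integrable_inner: "integrable M (\<lambda>\<omega>. f (X \<omega>) \<bullet> g (X' \<omega>))"
    and L2_of_abs_integral_inner_le:
      "\<bar>\<integral>\<omega>. f (X \<omega>) \<bullet> g (X' \<omega>) \<partial>M\<bar> \<le> L2_norm_of M X f * L2_norm_of M X' g"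
  using integrable_inner_square_integrable[OF borel_measurable_L2_of_comp[OF f X]
      borel_measurable_L2_of_comp[OF g X']]
    abs_integral_inner_le[OF borel_measurable_L2_of_comp[OF f X] borel_measurable_L2_of_comp[OF g X']]
    f g
  by (auto simp: L2_of_def L2_norm_of_def)

lemma L2_of_bounded:
  fixes f :: "'b \<Rightarrow> 'c::euclidean_space"
  assumes "prob_space M" and X: "X \<in> M \<rightarrow>\<^sub>M N" and f: "f \<in> borel_measurable N"
    and bound: "\<And>v. norm (f v) \<le> K"
  shows "L2_of M X N f"
proof -
  interpret prob_space M by fact
  have "integrable M (\<lambda>\<omega>. (norm (f (X \<omega>)))\<^sup>2)"
    by (rule integrable_const_bound[where B = "K\<^sup>2"])
       (use X f bound in \<open>auto intro!: power_mono\<close>)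
  with f show ?thesis by (simp add: L2_of_def)
qed

lemma L2_of_add:
  fixes f g :: "'b \<Rightarrow> 'c::euclidean_space"
  assumes f: "L2_of M X N f" and g: "L2_of M X N g" and X: "X \<in> M \<rightarrow>\<^sub>M N"
  shows "L2_of M X N (\<lambda>v. f v + g v)"
proof -
  have norm_add_le: "(norm (x + y))\<^sup>2 \<le> 2 * (norm x)\<^sup>2 + 2 * (norm y)\<^sup>2" for x y :: 'c
  proof -
    have "(norm (x + y))\<^sup>2 \<le> (norm x + norm y)\<^sup>2"
      by (rule power_mono[OF norm_triangle_ineq]) simp
    also have "\<dots> \<le> 2 * (norm x)\<^sup>2 + 2 * (norm y)\<^sup>2"
      using sum_squares_bound[of "norm x" "norm y"] by (simp add: power2_sum)
    finally show ?thesis .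
  qed
  have "integrable M (\<lambda>\<omega>. (norm (f (X \<omega>) + g (X \<omega>)))\<^sup>2)"
    by (rule Bochner_Integration.integrable_bound[where f = "\<lambda>\<omega>. 2 * (norm (f (X \<omega>)))\<^sup>2 + 2 * (norm (g (X \<omega>)))\<^sup>2"])
       (use f g norm_add_le borel_measurable_L2_of_comp[OF f X] borel_measurable_L2_of_comp[OF g X]
        in \<open>auto simp: L2_of_def\<close>)
  with f g show ?thesis by (auto simp: L2_of_def)
qed

lemma L2_of_uminus: "L2_of M X N f \<Longrightarrow> L2_of M X N (\<lambda>v. - f v)"
  by (simp add: L2_of_def)

lemma L2_of_diff:
  fixes f g :: "'b \<Rightarrow> 'c::euclidean_space"
  assumes "L2_of M X N f" and "L2_of M X N g" and "X \<in> M \<rightarrow>\<^sub>M N"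
  shows "L2_of M X N (\<lambda>v. f v - g v)"
  using L2_of_add[OF assms(1) L2_of_uminus[OF assms(2)] assms(3)] by simp

lemma L2_of_sum:
  fixes f :: "'i \<Rightarrow> 'b \<Rightarrow> 'c::euclidean_space"
  assumes "finite A" and "\<And>j. j \<in> A \<Longrightarrow> L2_of M X N (f j)" and X: "X \<in> M \<rightarrow>\<^sub>M N"
  shows "L2_of M X N (\<lambda>v. \<Sum>j\<in>A. f j v)"
  using assms(1,2)
proof (induction A rule: finite_induct)
  case empty
  show ?case by (simp add: L2_of_def)
next
  case (insert a A)
  then show ?case by (simp add: L2_of_add[OF _ _ X])
qed

lemma L2_norm_of_sum_le:
  fixes f :: "'i \<Rightarrow> 'b \<Rightarrow> 'c::euclidean_space"
  assumes "finite A" and f: "\<And>j. j \<in> A \<Longrightarrow> L2_of M X N (f j)"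
    and bound: "\<And>j. j \<in> A \<Longrightarrow> L2_norm_of M X (f j) \<le> C * a j" and C: "0 \<le> C"
    and X: "X \<in> M \<rightarrow>\<^sub>M N"
  shows "L2_norm_of M X (\<lambda>v. \<Sum>j\<in>A. f j v) \<le> sqrt (card A) * C * sqrt (\<Sum>j\<in>A. (a j)\<^sup>2)"
proof -
  have norm_sum_le: "(norm (\<Sum>j\<in>A. x j))\<^sup>2 \<le> card A * (\<Sum>j\<in>A. (norm (x j))\<^sup>2)" for x :: "'i \<Rightarrow> 'c"
  proof -
    have "(norm (\<Sum>j\<in>A. x j))\<^sup>2 \<le> (\<Sum>j\<in>A. norm (x j))\<^sup>2"
      by (rule power_mono[OF norm_sum]) simp
    also have "\<dots> \<le> card A * (\<Sum>j\<in>A. (norm (x j))\<^sup>2)"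
      using Cauchy_Schwarz_ineq_sum[of "\<lambda>_. 1" "\<lambda>j. norm (x j)" A] by simp
    finally show ?thesis .
  qed
  have int: "integrable M (\<lambda>\<omega>. (norm (f j (X \<omega>)))\<^sup>2)" if "j \<in> A" for j
    using f[OF that] by (simp add: L2_of_def)
  have "(L2_norm_of M X (\<lambda>v. \<Sum>j\<in>A. f j v))\<^sup>2 = (\<integral>\<omega>. (norm (\<Sum>j\<in>A. f j (X \<omega>)))\<^sup>2 \<partial>M)"
    by (rule L2_norm_of_power2)
  also have "\<dots> \<le> (\<integral>\<omega>. card A * (\<Sum>j\<in>A. (norm (f j (X \<omega>)))\<^sup>2) \<partial>M)"
    by (rule integral_mono)
       (use L2_of_sum[OF assms(1) f X] int norm_sum_le in \<open>auto simp: L2_of_def\<close>)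
  also have "\<dots> = card A * (\<Sum>j\<in>A. (L2_norm_of M X (f j))\<^sup>2)"
    using int by (simp add: L2_norm_of_power2)
  also have "\<dots> \<le> card A * (\<Sum>j\<in>A. (C * a j)\<^sup>2)"
    using bound by (intro mult_left_mono sum_mono power_mono L2_norm_of_nonneg) auto
  also have "\<dots> = card A * C\<^sup>2 * (\<Sum>j\<in>A. (a j)\<^sup>2)"
    by (simp add: power_mult_distrib sum_distrib_left mult.assoc)
  also have "\<dots> = (sqrt (card A) * C * sqrt (\<Sum>j\<in>A. (a j)\<^sup>2))\<^sup>2"
    by (simp add: power_mult_distrib sum_nonneg)
  finally show ?thesis
    by (rule power2_le_imp_le) (simp add: C sum_nonneg)
qed

definition truncate :: "nat \<Rightarrow> ('b \<Rightarrow> 'c::real_normed_vector) \<Rightarrow> 'b \<Rightarrow> 'c" where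
  "truncate n f v = (if norm (f v) \<le> real n then f v else 0)"

lemma norm_truncate_le: "norm (truncate n f v) \<le> real n"
  by (auto simp: truncate_def)

lemma borel_measurable_truncate [measurable]:
  fixes f :: "'b \<Rightarrow> 'c::euclidean_space"
  assumes [measurable]: "f \<in> borel_measurable N"
  shows "truncate n f \<in> borel_measurable N"
  unfolding truncate_def by measurable

lemma tendsto_comp_truncate: "(\<lambda>n. h (truncate n f v)) \<longlonglongrightarrow> h (f v)"
proof (rule tendsto_eventually)
  obtain n0 where "norm (f v) \<le> real n0" using real_arch_simple by blast
  then have "h (truncate n f v) = h (f v)" if "n0 \<le> n" for n
    using that by (auto simp: truncate_def)
  then show "eventually (\<lambda>n. h (truncate n f v) = h (f v)) sequentially"
    by (auto simp: eventually_sequentially)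
qed

lemma L2_of_truncate:
  fixes f :: "'b \<Rightarrow> 'c::euclidean_space"
  assumes "prob_space M" and "X \<in> M \<rightarrow>\<^sub>M N" and "f \<in> borel_measurable N"
  shows "L2_of M X N (truncate n f)"
  using L2_of_bounded[OF assms(1,2) borel_measurable_truncate[OF assms(3)] norm_truncate_le] .

lemma L2_norm_of_truncation_error_tendsto:
  fixes f :: "'b \<Rightarrow> 'c::euclidean_space"
  assumes f: "L2_of M X N f" and X: "X \<in> M \<rightarrow>\<^sub>M N"
  shows "(\<lambda>n. L2_norm_of M X (\<lambda>v. f v - truncate n f v)) \<longlonglongrightarrow> 0"
proof -
  have [measurable]: "f \<in> borel_measurable N" "(\<lambda>\<omega>. f (X \<omega>)) \<in> borel_measurable M"
    using f borel_measurable_L2_of_comp[OF f X] by (simp_all add: L2_of_def)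
  have "(\<lambda>n. \<integral>\<omega>. (norm (f (X \<omega>) - truncate n f (X \<omega>)))\<^sup>2 \<partial>M) \<longlonglongrightarrow> (\<integral>\<omega>. 0 \<partial>M)"
  proof (rule integral_dominated_convergence[where w = "\<lambda>\<omega>. (norm (f (X \<omega>)))\<^sup>2"])
    show "integrable M (\<lambda>\<omega>. (norm (f (X \<omega>)))\<^sup>2)" using f by (simp add: L2_of_def)
    show "AE \<omega> in M. (\<lambda>n. (norm (f (X \<omega>) - truncate n f (X \<omega>)))\<^sup>2) \<longlonglongrightarrow> 0"
    proof (rule AE_I2)
      fix \<omega>
      show "(\<lambda>n. (norm (f (X \<omega>) - truncate n f (X \<omega>)))\<^sup>2) \<longlonglongrightarrow> 0"
        using tendsto_comp_truncate[of "\<lambda>y. (norm (f (X \<omega>) - y))\<^sup>2" f "X \<omega>"] by simp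
    qed
    show "AE \<omega> in M. norm ((norm (f (X \<omega>) - truncate n f (X \<omega>)))\<^sup>2) \<le> (norm (f (X \<omega>)))\<^sup>2" for n
      by (intro AE_I2) (auto simp: truncate_def)
  qed (use X in measurable)
  then have "(\<lambda>n. sqrt (\<integral>\<omega>. (norm (f (X \<omega>) - truncate n f (X \<omega>)))\<^sup>2 \<partial>M)) \<longlonglongrightarrow> sqrt 0"
    by (intro tendsto_real_sqrt) simp
  then show ?thesis by (simp add: L2_norm_of_def)
qed

lemma L2_of_if_truncations_bounded:
  fixes f :: "'b \<Rightarrow> 'c::euclidean_space"
  assumes "prob_space M" and X: "X \<in> M \<rightarrow>\<^sub>M N" and f [measurable]: "f \<in> borel_measurable N"
    and bound: "\<And>n. L2_norm_of M X (truncate n f) \<le> B"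
  shows "L2_of M X N f" and "L2_norm_of M X f \<le> B"
proof -
  define F where "F n = (\<lambda>\<omega>. (norm (truncate n f (X \<omega>)))\<^sup>2)" for n
  have F_int: "integrable M (F n)" for n
    using L2_of_truncate[OF assms(1-3)] unfolding F_def L2_of_def by blast
  have F_mono: "mono (\<lambda>n. F n \<omega>)" for \<omega>
    by (rule incseq_SucI) (auto simp: F_def truncate_def)
  have B: "0 \<le> B" using bound[of 0] L2_norm_of_nonneg[of M X] by (meson order_trans)
  have F_bound: "integral\<^sup>L M (F n) \<le> B\<^sup>2" for n
    using power_mono[OF bound[of n] L2_norm_of_nonneg, where n = 2] by (simp add: F_def L2_norm_of_power2)
  have "incseq (\<lambda>n. integral\<^sup>L M (F n))"
    using F_mono by (intro incseq_SucI integral_mono F_int) (auto simp: mono_def)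
  then have lim: "(\<lambda>n. integral\<^sup>L M (F n)) \<longlonglongrightarrow> (SUP n. integral\<^sup>L M (F n))"
    using F_bound by (intro LIMSEQ_incseq_SUP bdd_aboveI2) auto
  have pointwise: "AE \<omega> in M. (\<lambda>n. F n \<omega>) \<longlonglongrightarrow> (norm (f (X \<omega>)))\<^sup>2"
    unfolding F_def by (intro AE_I2) (rule tendsto_comp_truncate[where h = "\<lambda>y. (norm y)\<^sup>2"])
  note MC = integral_monotone_convergence_nonneg[OF F_int _ _ pointwise lim]
  have "(\<lambda>\<omega>. (norm (f (X \<omega>)))\<^sup>2) \<in> borel_measurable M" using X by measurable
  then have "integrable M (\<lambda>\<omega>. (norm (f (X \<omega>)))\<^sup>2)"
    and integral_eq: "(\<integral>\<omega>. (norm (f (X \<omega>)))\<^sup>2 \<partial>M) = (SUP n. integral\<^sup>L M (F n))"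
    using MC F_mono by (auto simp: F_def)
  then show "L2_of M X N f" by (simp add: L2_of_def)
  have "(L2_norm_of M X f)\<^sup>2 \<le> B\<^sup>2"
    using F_bound by (simp add: L2_norm_of_power2 integral_eq cSUP_least)
  then show "L2_norm_of M X f \<le> B"
    using B by (simp add: power2_le_iff_abs_le)
qed

section \<open>The adjoint of a single conditional-mean operator\<close>

definition cond_exp_repr ::
  "'a measure \<Rightarrow> ('a \<Rightarrow> 'y) \<Rightarrow> ('a \<Rightarrow> 'v) \<Rightarrow> 'v measure \<Rightarrow> ('a \<Rightarrow> 'z) \<Rightarrow> ('y \<Rightarrow> real^'d)
    \<Rightarrow> ('z \<Rightarrow> real) \<Rightarrow> ('v \<Rightarrow> real^'d) \<Rightarrow> bool" where
  "cond_exp_repr M Y V MV Z \<nu> g \<phi> \<longleftrightarrow> \<phi> \<in> borel_measurable MV \<and>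
     (AE \<omega> in M. \<forall>k. \<phi> (V \<omega>) $ k = cond_exp_given M V MV (\<lambda>\<omega>'. \<nu> (Y \<omega>') $ k * g (Z \<omega>')) \<omega>)"

locale cond_exp_operator = prob_space M
  for M :: "'a measure"
    and Y :: "'a \<Rightarrow> 'y" and MY :: "'y measure"
    and V :: "'a \<Rightarrow> 'v" and MV :: "'v measure"
    and Z :: "'a \<Rightarrow> 'z" and MZ :: "'z measure"
    and S :: "('v \<Rightarrow> real^'d) \<Rightarrow> ('z \<Rightarrow> real)"
    and \<nu> :: "'y \<Rightarrow> real^'d" +
  assumes Y_measurable [measurable]: "Y \<in> M \<rightarrow>\<^sub>M MY"
    and V_measurable [measurable]: "V \<in> M \<rightarrow>\<^sub>M MV"
    and Z_measurable [measurable]: "Z \<in> M \<rightarrow>\<^sub>M MZ"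
    and S_bounded_linear: "bounded_linear_L2 M V MV Z MZ S"
    and \<nu>_measurable [measurable]: "\<nu> \<in> borel_measurable MY"
    and \<nu>_mult_integrable: "\<And>g k. L2_of M Z MZ g \<Longrightarrow> integrable M (\<lambda>\<omega>. \<nu> (Y \<omega>) $ k * g (Z \<omega>))"
    and S_cond_exp: "\<And>b. L2_of M V MV b \<Longrightarrow>
      AE \<omega> in M. S b (Z \<omega>) = cond_exp_given M Z MZ (\<lambda>\<omega>'. b (V \<omega>') \<bullet> \<nu> (Y \<omega>')) \<omega>"
begin

sublocale FV: sigma_finite_subalgebra M "sigma_gen M V MV"
  by (rule sigma_finite_subalgebra_sigma_gen[OF prob_space_axioms V_measurable])

sublocale FZ: sigma_finite_subalgebra M "sigma_gen M Z MZ"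
  by (rule sigma_finite_subalgebra_sigma_gen[OF prob_space_axioms Z_measurable])

lemma L2_S: "L2_of M V MV b \<Longrightarrow> L2_of M Z MZ (S b)"
  using S_bounded_linear by (simp add: bounded_linear_L2_def)

lemma S_diff:
  assumes "L2_of M V MV b1" and "L2_of M V MV b2"
  shows "AE \<omega> in M. S (\<lambda>v. b1 v - b2 v) (Z \<omega>) = S b1 (Z \<omega>) - S b2 (Z \<omega>)"
proof -
  have "AE \<omega> in M. S (\<lambda>v. 1 *\<^sub>R b1 v + (-1) *\<^sub>R b2 v) (Z \<omega>) = 1 * S b1 (Z \<omega>) + (-1) * S b2 (Z \<omega>)"
    using S_bounded_linear assms unfolding bounded_linear_L2_def by blast
  then show ?thesis by simp
qed

lemma S_bound: "\<exists>C\<ge>0. \<forall>b. L2_of M V MV b \<longrightarrow> L2_norm_of M Z (S b) \<le> C * L2_norm_of M V b"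
proof -
  obtain C where C: "\<And>b. L2_of M V MV b \<Longrightarrow> L2_norm_of M Z (S b) \<le> C * L2_norm_of M V b"
    using S_bounded_linear unfolding bounded_linear_L2_def by blast
  have "C * L2_norm_of M V b \<le> max C 0 * L2_norm_of M V b" for b :: "'v \<Rightarrow> real^'d"
    by (rule mult_right_mono) (auto simp: L2_norm_of_nonneg)
  then show ?thesis using C by (intro exI[of _ "max C 0"]) (auto intro: order_trans)
qed

lemma ex_cond_exp_repr: "\<exists>\<phi>. cond_exp_repr M Y V MV Z \<nu> g \<phi>"
proof -
  let ?ce = "\<lambda>k. cond_exp_given M V MV (\<lambda>\<omega>'. \<nu> (Y \<omega>') $ k * g (Z \<omega>'))"
  have "\<exists>\<phi>\<in>borel_measurable MV. \<forall>\<omega>\<in>space M. ?ce k \<omega> = \<phi> (V \<omega>)" for k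
  proof (rule borel_measurable_vimage_algebra_factor)
    show "?ce k \<in> borel_measurable (vimage_algebra (space M) V MV)"
      unfolding cond_exp_given_def sigma_gen_def[symmetric] by (rule borel_measurable_cond_exp)
  qed (use measurable_space[OF V_measurable] in blast)
  then have "\<forall>k. \<exists>\<phi>. \<phi> \<in> borel_measurable MV \<and> (\<forall>\<omega>\<in>space M. ?ce k \<omega> = \<phi> (V \<omega>))"
    by blast
  from choice[OF this] obtain \<phi> where
    \<phi>: "\<forall>k. \<phi> k \<in> borel_measurable MV \<and> (\<forall>\<omega>\<in>space M. ?ce k \<omega> = \<phi> k (V \<omega>))" ..
  have "(\<lambda>v. \<chi> k. \<phi> k v) \<in> borel_measurable MV"
    using \<phi> by (intro borel_measurable_vec_lambda) blast
  with \<phi> show ?thesis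
    by (intro exI[of _ "\<lambda>v. \<chi> k. \<phi> k v"]) (auto simp: cond_exp_repr_def)
qed

lemma integrable_S_mult:
  "L2_of M V MV b \<Longrightarrow> L2_of M Z MZ g \<Longrightarrow> integrable M (\<lambda>\<omega>. S b (Z \<omega>) * g (Z \<omega>))"
  using L2_of_integrable_inner[OF L2_S _ Z_measurable Z_measurable] by simp

lemma integral_S_mult_eq_bounded:
  assumes b: "L2_of M V MV b" and b_bound: "\<And>v. norm (b v) \<le> K" and g: "L2_of M Z MZ g"
    and \<phi>: "cond_exp_repr M Y V MV Z \<nu> g \<phi>"
  shows "(\<integral>\<omega>. S b (Z \<omega>) * g (Z \<omega>) \<partial>M) = (\<integral>\<omega>. b (V \<omega>) \<bullet> \<phi> (V \<omega>) \<partial>M)"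
proof -
  have [measurable]: "b \<in> borel_measurable MV" "\<phi> \<in> borel_measurable MV"
    and g_meas [measurable]: "g \<in> borel_measurable MZ"
    using b g \<phi> by (auto simp: L2_of_def cond_exp_repr_def)
  define h where "h k = (\<lambda>\<omega>. \<nu> (Y \<omega>) $ k * g (Z \<omega>))" for k
  have h_int: "integrable M (h k)" for k
    using \<nu>_mult_integrable[OF g] by (simp add: h_def)
  have h_meas [measurable]: "h k \<in> borel_measurable M" for k
    unfolding h_def by measurable
  have bk_FV [measurable]: "(\<lambda>\<omega>. b (V \<omega>) $ k) \<in> borel_measurable (sigma_gen M V MV)" for k
    by (rule borel_measurable_sigma_gen_comp[OF V_measurable]) measurable
  have bh_int: "integrable M (\<lambda>\<omega>. b (V \<omega>) $ k * h k \<omega>)" for k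
  proof (rule Bochner_Integration.integrable_bound[OF integrable_mult_right[OF h_int, of K]])
    have "\<bar>b v $ k\<bar> \<le> \<bar>K\<bar>" for v
      using component_le_norm_cart[of "b v" k] b_bound[of v] abs_ge_self[of K] by linarith
    then show "AE \<omega> in M. norm (b (V \<omega>) $ k * h k \<omega>) \<le> norm (K * h k \<omega>)"
      by (intro AE_I2) (simp add: abs_mult mult_right_mono)
  qed measurable
  have g_inner: "g (Z \<omega>) * (b (V \<omega>) \<bullet> \<nu> (Y \<omega>)) = (\<Sum>k\<in>UNIV. b (V \<omega>) $ k * h k \<omega>)" for \<omega>
    by (simp add: h_def inner_vec_def sum_distrib_left algebra_simps)
  have g_inner_int: "integrable M (\<lambda>\<omega>. g (Z \<omega>) * (b (V \<omega>) \<bullet> \<nu> (Y \<omega>)))"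
    unfolding g_inner using bh_int by simp
  have \<phi>_cond_exp: "AE \<omega> in M. b (V \<omega>) $ k * real_cond_exp M (sigma_gen M V MV) (h k) \<omega>
      = b (V \<omega>) $ k * \<phi> (V \<omega>) $ k" for k
    using \<phi> unfolding cond_exp_repr_def cond_exp_given_def h_def by auto
  have b\<phi>_int: "integrable M (\<lambda>\<omega>. b (V \<omega>) $ k * \<phi> (V \<omega>) $ k)" for k
  proof (rule integrable_cong_AE_imp[OF FV.real_cond_exp_intg(1)[OF bh_int bk_FV h_meas]])
    show "AE \<omega> in M. b (V \<omega>) $ k * real_cond_exp M (sigma_gen M V MV) (h k) \<omega>
        = b (V \<omega>) $ k * \<phi> (V \<omega>) $ k"
      by (rule \<phi>_cond_exp)
  qed measurable
  have "(\<integral>\<omega>. S b (Z \<omega>) * g (Z \<omega>) \<partial>M)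
      = (\<integral>\<omega>. g (Z \<omega>) * real_cond_exp M (sigma_gen M Z MZ) (\<lambda>\<omega>. b (V \<omega>) \<bullet> \<nu> (Y \<omega>)) \<omega> \<partial>M)"
    using S_cond_exp[OF b] L2_S[OF b]
    by (intro integral_cong_AE) (auto simp: cond_exp_given_def L2_of_def)
  also have "\<dots> = (\<integral>\<omega>. g (Z \<omega>) * (b (V \<omega>) \<bullet> \<nu> (Y \<omega>)) \<partial>M)"
    by (rule FZ.real_cond_exp_intg(2)[OF g_inner_int borel_measurable_sigma_gen_comp[OF Z_measurable g_meas]])
       measurable
  also have "\<dots> = (\<Sum>k\<in>UNIV. \<integral>\<omega>. b (V \<omega>) $ k * h k \<omega> \<partial>M)"
    using bh_int by (simp add: g_inner)
  also have "\<dots> = (\<Sum>k\<in>UNIV. \<integral>\<omega>. b (V \<omega>) $ k * real_cond_exp M (sigma_gen M V MV) (h k) \<omega> \<partial>M)"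
    by (intro sum.cong refl FV.real_cond_exp_intg(2)[OF bh_int bk_FV h_meas, symmetric])
  also have "\<dots> = (\<Sum>k\<in>UNIV. \<integral>\<omega>. b (V \<omega>) $ k * \<phi> (V \<omega>) $ k \<partial>M)"
    using \<phi>_cond_exp by (intro sum.cong refl integral_cong_AE) auto
  also have "\<dots> = (\<integral>\<omega>. b (V \<omega>) \<bullet> \<phi> (V \<omega>) \<partial>M)"
    using b\<phi>_int by (simp add: inner_vec_def)
  finally show ?thesis .
qed

lemma cond_exp_repr_L2:
  assumes C: "0 \<le> C" "\<And>b. L2_of M V MV b \<Longrightarrow> L2_norm_of M Z (S b) \<le> C * L2_norm_of M V b"
    and g: "L2_of M Z MZ g" and \<phi>: "cond_exp_repr M Y V MV Z \<nu> g \<phi>"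
  shows "L2_of M V MV \<phi>" and "L2_norm_of M V \<phi> \<le> C * L2_norm_of M Z g"
proof -
  have \<phi>_meas [measurable]: "\<phi> \<in> borel_measurable MV"
    using \<phi> by (simp add: cond_exp_repr_def)
  have "L2_norm_of M V (truncate n \<phi>) \<le> C * L2_norm_of M Z g" for n
  proof -
    let ?t = "truncate n \<phi>"
    have t: "L2_of M V MV ?t"
      by (rule L2_of_truncate[OF prob_space_axioms V_measurable \<phi>_meas])
    have "(norm (?t v))\<^sup>2 = ?t v \<bullet> \<phi> v" for v
      by (simp add: truncate_def power2_norm_eq_inner)
    then have "(L2_norm_of M V ?t)\<^sup>2 = (\<integral>\<omega>. ?t (V \<omega>) \<bullet> \<phi> (V \<omega>) \<partial>M)"
      by (simp add: L2_norm_of_power2)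
    also have "\<dots> = (\<integral>\<omega>. S ?t (Z \<omega>) * g (Z \<omega>) \<partial>M)"
      by (rule integral_S_mult_eq_bounded[OF t norm_truncate_le g \<phi>, symmetric])
    also have "\<dots> \<le> L2_norm_of M Z (S ?t) * L2_norm_of M Z g"
      using L2_of_abs_integral_inner_le[OF L2_S[OF t] g Z_measurable Z_measurable] by simp
    also have "\<dots> \<le> C * L2_norm_of M V ?t * L2_norm_of M Z g"
      by (intro mult_right_mono C(2)[OF t] L2_norm_of_nonneg)
    finally have "L2_norm_of M V ?t * L2_norm_of M V ?t
        \<le> (C * L2_norm_of M Z g) * L2_norm_of M V ?t"
      by (simp add: power2_eq_square algebra_simps)
    then show ?thesis
      using C(1) L2_norm_of_nonneg[of M V ?t] L2_norm_of_nonneg[of M Z g]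
      by (cases "L2_norm_of M V ?t = 0") (auto simp: mult_le_cancel_right)
  qed
  then show "L2_of M V MV \<phi>" "L2_norm_of M V \<phi> \<le> C * L2_norm_of M Z g"
    using L2_of_if_truncations_bounded[OF prob_space_axioms V_measurable \<phi>_meas] by blast+
qed

lemma integral_S_diff_mult:
  assumes b: "L2_of M V MV b" and c: "L2_of M V MV c" and g: "L2_of M Z MZ g"
  shows "(\<integral>\<omega>. S (\<lambda>v. b v - c v) (Z \<omega>) * g (Z \<omega>) \<partial>M)
    = (\<integral>\<omega>. S b (Z \<omega>) * g (Z \<omega>) \<partial>M) - (\<integral>\<omega>. S c (Z \<omega>) * g (Z \<omega>) \<partial>M)"
proof -
  have d: "L2_of M V MV (\<lambda>v. b v - c v)"
    by (rule L2_of_diff[OF b c V_measurable])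
  note meas = borel_measurable_integrable[OF integrable_S_mult[OF d g]]
    borel_measurable_diff[OF borel_measurable_integrable[OF integrable_S_mult[OF b g]]
      borel_measurable_integrable[OF integrable_S_mult[OF c g]]]
  have "AE \<omega> in M. S (\<lambda>v. b v - c v) (Z \<omega>) * g (Z \<omega>) = S b (Z \<omega>) * g (Z \<omega>) - S c (Z \<omega>) * g (Z \<omega>)"
    using S_diff[OF b c] by eventually_elim (simp add: left_diff_distrib)
  then have "(\<integral>\<omega>. S (\<lambda>v. b v - c v) (Z \<omega>) * g (Z \<omega>) \<partial>M)
      = (\<integral>\<omega>. S b (Z \<omega>) * g (Z \<omega>) - S c (Z \<omega>) * g (Z \<omega>) \<partial>M)"
    by (rule integral_cong_AE[OF meas])
  also have "\<dots> = (\<integral>\<omega>. S b (Z \<omega>) * g (Z \<omega>) \<partial>M) - (\<integral>\<omega>. S c (Z \<omega>) * g (Z \<omega>) \<partial>M)"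
    by (rule Bochner_Integration.integral_diff[OF integrable_S_mult[OF b g] integrable_S_mult[OF c g]])
  finally show ?thesis .
qed

lemma tendsto_integral_S_mult:
  assumes b: "L2_of M V MV b" and bs: "\<And>n. L2_of M V MV (bs n)" and g: "L2_of M Z MZ g"
    and lim: "(\<lambda>n. L2_norm_of M V (\<lambda>v. b v - bs n v)) \<longlonglongrightarrow> 0"
  shows "(\<lambda>n. \<integral>\<omega>. S (bs n) (Z \<omega>) * g (Z \<omega>) \<partial>M) \<longlonglongrightarrow> (\<integral>\<omega>. S b (Z \<omega>) * g (Z \<omega>) \<partial>M)"
proof -
  obtain C where C: "\<And>b. L2_of M V MV b \<Longrightarrow> L2_norm_of M Z (S b) \<le> C * L2_norm_of M V b"
    using S_bound by blast
  let ?I = "\<lambda>c. \<integral>\<omega>. S c (Z \<omega>) * g (Z \<omega>) \<partial>M"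
  have bound: "norm (?I b - ?I (bs n)) \<le> C * L2_norm_of M V (\<lambda>v. b v - bs n v) * L2_norm_of M Z g" for n
  proof -
    have d: "L2_of M V MV (\<lambda>v. b v - bs n v)"
      by (rule L2_of_diff[OF b bs V_measurable])
    have "norm (?I b - ?I (bs n)) \<le> L2_norm_of M Z (S (\<lambda>v. b v - bs n v)) * L2_norm_of M Z g"
      using L2_of_abs_integral_inner_le[OF L2_S[OF d] g Z_measurable Z_measurable]
      by (simp add: integral_S_diff_mult[OF b bs g])
    also have "\<dots> \<le> C * L2_norm_of M V (\<lambda>v. b v - bs n v) * L2_norm_of M Z g"
      by (rule mult_right_mono[OF C[OF d] L2_norm_of_nonneg])
    finally show ?thesis .
  qed
  have "(\<lambda>n. C * L2_norm_of M V (\<lambda>v. b v - bs n v) * L2_norm_of M Z g) \<longlonglongrightarrow> C * 0 * L2_norm_of M Z g"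
    by (intro tendsto_mult tendsto_const lim)
  then have "(\<lambda>n. ?I b - ?I (bs n)) \<longlonglongrightarrow> 0"
    using Lim_null_comparison[OF always_eventually[OF allI[OF bound]]] by simp
  then have "(\<lambda>n. ?I b - (?I b - ?I (bs n))) \<longlonglongrightarrow> ?I b - 0"
    by (intro tendsto_diff tendsto_const)
  then show ?thesis by simp
qed

lemma integral_S_mult_eq:
  assumes b: "L2_of M V MV b" and g: "L2_of M Z MZ g" and \<phi>: "cond_exp_repr M Y V MV Z \<nu> g \<phi>"
  shows "(\<integral>\<omega>. S b (Z \<omega>) * g (Z \<omega>) \<partial>M) = (\<integral>\<omega>. b (V \<omega>) \<bullet> \<phi> (V \<omega>) \<partial>M)"
proof -
  obtain C where "0 \<le> C" "\<And>b. L2_of M V MV b \<Longrightarrow> L2_norm_of M Z (S b) \<le> C * L2_norm_of M V b"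
    using S_bound by blast
  then have \<phi>_L2: "L2_of M V MV \<phi>" by (rule cond_exp_repr_L2(1)[OF _ _ g \<phi>])
  have b_meas [measurable]: "b \<in> borel_measurable MV" and [measurable]: "\<phi> \<in> borel_measurable MV"
    using b \<phi> by (simp_all add: L2_of_def cond_exp_repr_def)
  have t: "L2_of M V MV (truncate n b)" for n
    by (rule L2_of_truncate[OF prob_space_axioms V_measurable b_meas])
  have "(\<lambda>n. \<integral>\<omega>. S (truncate n b) (Z \<omega>) * g (Z \<omega>) \<partial>M) \<longlonglongrightarrow> (\<integral>\<omega>. S b (Z \<omega>) * g (Z \<omega>) \<partial>M)"
    by (rule tendsto_integral_S_mult[OF b t g L2_norm_of_truncation_error_tendsto[OF b V_measurable]])
  moreover have "(\<lambda>n. \<integral>\<omega>. truncate n b (V \<omega>) \<bullet> \<phi> (V \<omega>) \<partial>M) \<longlonglongrightarrow> (\<integral>\<omega>. b (V \<omega>) \<bullet> \<phi> (V \<omega>) \<partial>M)"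
  proof (rule integral_dominated_convergence[where w = "\<lambda>\<omega>. \<bar>b (V \<omega>) \<bullet> \<phi> (V \<omega>)\<bar>"])
    show "integrable M (\<lambda>\<omega>. \<bar>b (V \<omega>) \<bullet> \<phi> (V \<omega>)\<bar>)"
      using L2_of_integrable_inner[OF b \<phi>_L2 V_measurable V_measurable] by simp
    show "AE \<omega> in M. (\<lambda>n. truncate n b (V \<omega>) \<bullet> \<phi> (V \<omega>)) \<longlonglongrightarrow> b (V \<omega>) \<bullet> \<phi> (V \<omega>)"
      by (intro AE_I2) (rule tendsto_comp_truncate[where h = "\<lambda>y. y \<bullet> \<phi> (V _)"])
    show "AE \<omega> in M. norm (truncate n b (V \<omega>) \<bullet> \<phi> (V \<omega>)) \<le> \<bar>b (V \<omega>) \<bullet> \<phi> (V \<omega>)\<bar>" for n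
      by (intro AE_I2) (simp add: truncate_def)
  qed measurable
  moreover have "(\<integral>\<omega>. S (truncate n b) (Z \<omega>) * g (Z \<omega>) \<partial>M)
      = (\<integral>\<omega>. truncate n b (V \<omega>) \<bullet> \<phi> (V \<omega>) \<partial>M)" for n
    by (rule integral_S_mult_eq_bounded[OF t norm_truncate_le g \<phi>])
  ultimately show ?thesis
    using LIMSEQ_unique by simp
qed

lemma cond_exp_repr_lincomb:
  assumes g1: "L2_of M Z MZ g1" and g2: "L2_of M Z MZ g2"
    and \<phi>1: "cond_exp_repr M Y V MV Z \<nu> g1 \<phi>1" and \<phi>2: "cond_exp_repr M Y V MV Z \<nu> g2 \<phi>2"
    and \<phi>: "cond_exp_repr M Y V MV Z \<nu> (\<lambda>z. a * g1 z + c * g2 z) \<phi>"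
  shows "AE \<omega> in M. \<phi> (V \<omega>) = a *\<^sub>R \<phi>1 (V \<omega>) + c *\<^sub>R \<phi>2 (V \<omega>)"
proof -
  let ?E = "real_cond_exp M (sigma_gen M V MV)"
  define h1 where "h1 k = (\<lambda>\<omega>. \<nu> (Y \<omega>) $ k * g1 (Z \<omega>))" for k
  define h2 where "h2 k = (\<lambda>\<omega>. \<nu> (Y \<omega>) $ k * g2 (Z \<omega>))" for k
  have "AE \<omega> in M. ?E (\<lambda>\<omega>. a * h1 k \<omega> + c * h2 k \<omega>) \<omega> = a * ?E (h1 k) \<omega> + c * ?E (h2 k) \<omega>" for k
  proof -
    have h: "integrable M (h1 k)" "integrable M (h2 k)"
      using \<nu>_mult_integrable[OF g1] \<nu>_mult_integrable[OF g2] by (simp_all add: h1_def h2_def)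
    have "AE \<omega> in M. ?E (\<lambda>\<omega>. a * h1 k \<omega> + c * h2 k \<omega>) \<omega>
        = ?E (\<lambda>\<omega>. a * h1 k \<omega>) \<omega> + ?E (\<lambda>\<omega>. c * h2 k \<omega>) \<omega>"
      using h by (intro FV.real_cond_exp_add) auto
    moreover have "AE \<omega> in M. ?E (\<lambda>\<omega>. a * h1 k \<omega>) \<omega> = a * ?E (h1 k) \<omega>"
      using h by (intro FV.real_cond_exp_cmult)
    moreover have "AE \<omega> in M. ?E (\<lambda>\<omega>. c * h2 k \<omega>) \<omega> = c * ?E (h2 k) \<omega>"
      using h by (intro FV.real_cond_exp_cmult)
    ultimately show ?thesis by eventually_elim simp
  qed
  then have "AE \<omega> in M. \<forall>k\<in>UNIV. ?E (\<lambda>\<omega>. a * h1 k \<omega> + c * h2 k \<omega>) \<omega> = a * ?E (h1 k) \<omega> + c * ?E (h2 k) \<omega>"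
    by (intro AE_finite_allI) auto
  moreover have "AE \<omega> in M. \<forall>k. \<phi> (V \<omega>) $ k = ?E (\<lambda>\<omega>. a * h1 k \<omega> + c * h2 k \<omega>) \<omega>"
    using \<phi> by (simp add: cond_exp_repr_def cond_exp_given_def h1_def h2_def algebra_simps)
  moreover have "AE \<omega> in M. \<forall>k. \<phi>1 (V \<omega>) $ k = ?E (h1 k) \<omega>"
    using \<phi>1 by (simp add: cond_exp_repr_def cond_exp_given_def h1_def)
  moreover have "AE \<omega> in M. \<forall>k. \<phi>2 (V \<omega>) $ k = ?E (h2 k) \<omega>"
    using \<phi>2 by (simp add: cond_exp_repr_def cond_exp_given_def h2_def)
  ultimately show ?thesis
    by eventually_elim (simp add: vec_eq_iff)
qed

end

section \<open>The adjoint of the stacked operator\<close>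

locale cond_exp_operator_family = prob_space M
  for M :: "'a measure"
    and Y :: "'a \<Rightarrow> 'y" and MY :: "'y measure"
    and V :: "'a \<Rightarrow> 'v" and MV :: "'v measure"
    and Z :: "nat \<Rightarrow> 'a \<Rightarrow> 'z" and MZ :: "nat \<Rightarrow> 'z measure"
    and S :: "nat \<Rightarrow> ('v \<Rightarrow> real^'d) \<Rightarrow> ('z \<Rightarrow> real)"
    and \<nu> :: "nat \<Rightarrow> 'y \<Rightarrow> real^'d"
    and J :: nat +
  assumes V_measurable [measurable]: "V \<in> M \<rightarrow>\<^sub>M MV"
    and component: "\<And>j. j < J \<Longrightarrow> cond_exp_operator M Y MY V MV (Z j) (MZ j) (S j) (\<nu> j)"
begin

definition adjoint_summand :: "(nat \<Rightarrow> 'z \<Rightarrow> real) \<Rightarrow> nat \<Rightarrow> 'v \<Rightarrow> real^'d" where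
  "adjoint_summand g j = (SOME \<phi>. cond_exp_repr M Y V MV (Z j) (\<nu> j) (g j) \<phi>)"

definition adjoint :: "(nat \<Rightarrow> 'z \<Rightarrow> real) \<Rightarrow> 'v \<Rightarrow> real^'d" where
  "adjoint g = (\<lambda>v. \<Sum>j<J. adjoint_summand g j v)"

lemma cond_exp_repr_adjoint_summand:
  "j < J \<Longrightarrow> cond_exp_repr M Y V MV (Z j) (\<nu> j) (g j) (adjoint_summand g j)"
  unfolding adjoint_summand_def by (rule someI_ex[OF cond_exp_operator.ex_cond_exp_repr[OF component]])

lemma uniform_S_bound:
  "\<exists>C\<ge>0. \<forall>j<J. \<forall>b. L2_of M V MV b \<longrightarrow> L2_norm_of M (Z j) (S j b) \<le> C * L2_norm_of M V b"
proof -
  have "\<forall>j\<in>{..<J}. \<exists>C. 0 \<le> C \<and> (\<forall>b. L2_of M V MV b \<longrightarrow> L2_norm_of M (Z j) (S j b) \<le> C * L2_norm_of M V b)"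
    using cond_exp_operator.S_bound[OF component] by simp
  from bchoice[OF this] obtain C where C: "\<forall>j\<in>{..<J}. 0 \<le> C j \<and>
      (\<forall>b. L2_of M V MV b \<longrightarrow> L2_norm_of M (Z j) (S j b) \<le> C j * L2_norm_of M V b)" ..
  have "L2_norm_of M (Z j) (S j b) \<le> (\<Sum>i<J. C i) * L2_norm_of M V b"
    if j: "j < J" and b: "L2_of M V MV b" for j b
  proof -
    have "L2_norm_of M (Z j) (S j b) \<le> C j * L2_norm_of M V b"
      using C j b by simp
    also have "\<dots> \<le> (\<Sum>i<J. C i) * L2_norm_of M V b"
      using C j by (intro mult_right_mono member_le_sum L2_norm_of_nonneg) auto
    finally show ?thesis .
  qed
  moreover have "0 \<le> (\<Sum>i<J. C i)"
    using C by (intro sum_nonneg) simp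
  ultimately show ?thesis by blast
qed

lemma adjoint_summand_bound:
  "\<exists>C\<ge>0. \<forall>g j. j < J \<longrightarrow> L2_of M (Z j) (MZ j) (g j) \<longrightarrow>
     L2_of M V MV (adjoint_summand g j) \<and>
     L2_norm_of M V (adjoint_summand g j) \<le> C * L2_norm_of M (Z j) (g j)"
proof -
  obtain C where C: "0 \<le> C"
    "\<And>j b. j < J \<Longrightarrow> L2_of M V MV b \<Longrightarrow> L2_norm_of M (Z j) (S j b) \<le> C * L2_norm_of M V b"
    using uniform_S_bound by blast
  note repr_L2 = cond_exp_operator.cond_exp_repr_L2[OF component C(1) C(2) _ cond_exp_repr_adjoint_summand]
  show ?thesis
    using C(1) repr_L2 by blast
qed

lemma L2_adjoint_summand:
  "j < J \<Longrightarrow> L2_of M (Z j) (MZ j) (g j) \<Longrightarrow> L2_of M V MV (adjoint_summand g j)"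
  using adjoint_summand_bound by blast

lemma L2_adjoint:
  assumes "\<forall>j<J. L2_of M (Z j) (MZ j) (g j)"
  shows "L2_of M V MV (adjoint g)"
  unfolding adjoint_def using assms L2_adjoint_summand
  by (intro L2_of_sum[OF _ _ V_measurable]) auto

lemma adjoint_bounded:
  "\<exists>C. \<forall>g. (\<forall>j<J. L2_of M (Z j) (MZ j) (g j)) \<longrightarrow>
     L2_norm_of M V (adjoint g) \<le> C * sqrt (\<Sum>j<J. (L2_norm_of M (Z j) (g j))\<^sup>2)"
proof -
  obtain C where C: "0 \<le> C" "\<And>g j. j < J \<Longrightarrow> L2_of M (Z j) (MZ j) (g j) \<Longrightarrow>
      L2_norm_of M V (adjoint_summand g j) \<le> C * L2_norm_of M (Z j) (g j)"
    using adjoint_summand_bound by blast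
  have "L2_norm_of M V (adjoint g) \<le> sqrt J * C * sqrt (\<Sum>j<J. (L2_norm_of M (Z j) (g j))\<^sup>2)"
    if "\<forall>j<J. L2_of M (Z j) (MZ j) (g j)" for g
  proof -
    have "L2_norm_of M V (\<lambda>v. \<Sum>j\<in>{..<J}. adjoint_summand g j v)
        \<le> sqrt (card {..<J}) * C * sqrt (\<Sum>j\<in>{..<J}. (L2_norm_of M (Z j) (g j))\<^sup>2)"
      by (rule L2_norm_of_sum_le[OF _ _ _ C(1) V_measurable]) (use that L2_adjoint_summand C(2) in auto)
    then show ?thesis by (simp add: adjoint_def)
  qed
  then show ?thesis by blast
qed

lemma integral_adjoint:
  assumes g: "\<forall>j<J. L2_of M (Z j) (MZ j) (g j)" and b: "L2_of M V MV b"
  shows "(\<Sum>j<J. \<integral>\<omega>. S j b (Z j \<omega>) * g j (Z j \<omega>) \<partial>M) = (\<integral>\<omega>. b (V \<omega>) \<bullet> adjoint g (V \<omega>) \<partial>M)"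
proof -
  have "(\<Sum>j<J. \<integral>\<omega>. S j b (Z j \<omega>) * g j (Z j \<omega>) \<partial>M)
      = (\<Sum>j<J. \<integral>\<omega>. b (V \<omega>) \<bullet> adjoint_summand g j (V \<omega>) \<partial>M)"
    using g b cond_exp_operator.integral_S_mult_eq[OF component _ _ cond_exp_repr_adjoint_summand]
    by (intro sum.cong) auto
  also have "\<dots> = (\<integral>\<omega>. (\<Sum>j<J. b (V \<omega>) \<bullet> adjoint_summand g j (V \<omega>)) \<partial>M)"
    using g L2_of_integrable_inner[OF b L2_adjoint_summand V_measurable V_measurable]
    by (intro Bochner_Integration.integral_sum[symmetric]) simp
  also have "\<dots> = (\<integral>\<omega>. b (V \<omega>) \<bullet> adjoint g (V \<omega>) \<partial>M)"
    by (simp add: adjoint_def inner_sum_right)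
  finally show ?thesis .
qed

lemma adjoint_lincomb:
  assumes g1: "\<forall>j<J. L2_of M (Z j) (MZ j) (g1 j)" and g2: "\<forall>j<J. L2_of M (Z j) (MZ j) (g2 j)"
  shows "AE \<omega> in M. adjoint (\<lambda>j z. a * g1 j z + c * g2 j z) (V \<omega>)
    = a *\<^sub>R adjoint g1 (V \<omega>) + c *\<^sub>R adjoint g2 (V \<omega>)"
proof -
  let ?g = "\<lambda>j z. a * g1 j z + c * g2 j z"
  have "AE \<omega> in M. adjoint_summand ?g j (V \<omega>)
      = a *\<^sub>R adjoint_summand g1 j (V \<omega>) + c *\<^sub>R adjoint_summand g2 j (V \<omega>)" if j: "j < J" for j
    using cond_exp_operator.cond_exp_repr_lincomb[OF component[OF j] _ _
        cond_exp_repr_adjoint_summand[OF j, of g1] cond_exp_repr_adjoint_summand[OF j, of g2]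
        cond_exp_repr_adjoint_summand[OF j, of ?g]] g1 g2 j
    by simp
  then have "AE \<omega> in M. \<forall>j\<in>{..<J}. adjoint_summand ?g j (V \<omega>)
      = a *\<^sub>R adjoint_summand g1 j (V \<omega>) + c *\<^sub>R adjoint_summand g2 j (V \<omega>)"
    by (intro AE_finite_allI) auto
  then show ?thesis
    by eventually_elim (simp add: adjoint_def scaleR_sum_right sum.distrib)
qed

lemma adjoint_cond_exp:
  "AE \<omega> in M. \<forall>k. adjoint g (V \<omega>) $ k =
     (\<Sum>j<J. cond_exp_given M V MV (\<lambda>\<omega>'. \<nu> j (Y \<omega>') $ k * g j (Z j \<omega>')) \<omega>)"
proof -
  have "AE \<omega> in M. \<forall>j\<in>{..<J}. \<forall>k. adjoint_summand g j (V \<omega>) $ k =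
      cond_exp_given M V MV (\<lambda>\<omega>'. \<nu> j (Y \<omega>') $ k * g j (Z j \<omega>')) \<omega>"
    using cond_exp_repr_adjoint_summand by (intro AE_finite_allI) (auto simp: cond_exp_repr_def)
  then show ?thesis
    by eventually_elim (simp add: adjoint_def)
qed

end

theorem proposition1:
  fixes M :: "'a measure"
    and Y :: "'a \<Rightarrow> 'y" and MY :: "'y measure"
    and V :: "'a \<Rightarrow> 'v" and MV :: "'v measure"
    and Z :: "nat \<Rightarrow> 'a \<Rightarrow> 'z" and MZ :: "nat \<Rightarrow> 'z measure"
    and J :: nat
    and h :: "nat \<Rightarrow> ('v \<Rightarrow> real^'d) \<Rightarrow> ('z \<Rightarrow> real)"
    and \<eta>0 :: "'v \<Rightarrow> real^'d"
    and S :: "nat \<Rightarrow> ('v \<Rightarrow> real^'d) \<Rightarrow> ('z \<Rightarrow> real)"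
    and \<nu> :: "nat \<Rightarrow> 'y \<Rightarrow> real^'d"
  assumes prob: "prob_space M"
    and Y_meas: "Y \<in> M \<rightarrow>\<^sub>M MY"
    and V_meas: "V \<in> M \<rightarrow>\<^sub>M MV"
    and Z_meas: "\<And>j. j < J \<Longrightarrow> Z j \<in> M \<rightarrow>\<^sub>M MZ j"
    and \<eta>0_B: "L2_of M V MV \<eta>0"
    \<comment> \<open>(i) h_j maps B into L^2(Z_j) and is Frechet differentiable in a neighbourhood of eta0,
        with derivative S^(j) at eta0\<close>
    and h_L2: "\<And>j \<eta>. j < J \<Longrightarrow> L2_of M V MV \<eta> \<Longrightarrow> L2_of M (Z j) (MZ j) (h j \<eta>)"
    and diff_nbhd: "\<And>j. j < J \<Longrightarrow> \<exists>r>0. \<forall>\<eta>. L2_of M V MV \<eta> \<longrightarrow>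
              L2_norm_of M V (\<lambda>v. \<eta> v - \<eta>0 v) < r \<longrightarrow>
              (\<exists>D. frechet_L2 M V MV (Z j) (MZ j) (h j) \<eta> D)"
    and diff_eta0: "\<And>j. j < J \<Longrightarrow> frechet_L2 M V MV (Z j) (MZ j) (h j) \<eta>0 (S j)"
    \<comment> \<open>(ii) [S^(j) b](Z_j) = E[ b(V)' nu_j(Y) | Z_j ]\<close>
    and \<nu>_meas: "\<And>j. j < J \<Longrightarrow> \<nu> j \<in> borel_measurable MY"
    and \<nu>_b_int: "\<And>j b. j < J \<Longrightarrow> L2_of M V MV b \<Longrightarrow>
              integrable M (\<lambda>\<omega>. b (V \<omega>) \<bullet> \<nu> j (Y \<omega>))"
    and \<nu>_g_int: "\<And>j g k. j < J \<Longrightarrow> L2_of M (Z j) (MZ j) g \<Longrightarrow>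
              integrable M (\<lambda>\<omega>. \<nu> j (Y \<omega>) $ k * g (Z j \<omega>))"
    and S_cond: "\<And>j b. j < J \<Longrightarrow> L2_of M V MV b \<Longrightarrow>
              AE \<omega> in M. S j b (Z j \<omega>) =
                 cond_exp_given M (Z j) (MZ j) (\<lambda>\<omega>'. b (V \<omega>') \<bullet> \<nu> j (Y \<omega>')) \<omega>"
  shows "\<exists>Sstar :: (nat \<Rightarrow> 'z \<Rightarrow> real) \<Rightarrow> ('v \<Rightarrow> real^'d).
     \<comment> \<open>S* maps L^2(Z) into B\<close>
     (\<forall>g. (\<forall>j<J. L2_of M (Z j) (MZ j) (g j)) \<longrightarrow> L2_of M V MV (Sstar g)) \<and>
     \<comment> \<open>adjoint: <S b, g>_{L^2(Z)} = <b, S* g>_B\<close>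
     (\<forall>g b. (\<forall>j<J. L2_of M (Z j) (MZ j) (g j)) \<longrightarrow> L2_of M V MV b \<longrightarrow>
        (\<Sum>j<J. \<integral>\<omega>. S j b (Z j \<omega>) * g j (Z j \<omega>) \<partial>M) = (\<integral>\<omega>. b (V \<omega>) \<bullet> Sstar g (V \<omega>) \<partial>M)) \<and>
     \<comment> \<open>linear\<close>
     (\<forall>g1 g2 (a::real) c. (\<forall>j<J. L2_of M (Z j) (MZ j) (g1 j)) \<longrightarrow> (\<forall>j<J. L2_of M (Z j) (MZ j) (g2 j)) \<longrightarrow>
        (AE \<omega> in M. Sstar (\<lambda>j z. a * g1 j z + c * g2 j z) (V \<omega>)
                      = a *\<^sub>R Sstar g1 (V \<omega>) + c *\<^sub>R Sstar g2 (V \<omega>))) \<and>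
     \<comment> \<open>continuous (bounded)\<close>
     (\<exists>C. \<forall>g. (\<forall>j<J. L2_of M (Z j) (MZ j) (g j)) \<longrightarrow>
        L2_norm_of M V (Sstar g) \<le> C * sqrt (\<Sum>j<J. (L2_norm_of M (Z j) (g j))\<^sup>2)) \<and>
     \<comment> \<open>formula: [S* g](V) = sum_j E[nu_j(Y) g_j(Z_j) | V]\<close>
     (\<forall>g. (\<forall>j<J. L2_of M (Z j) (MZ j) (g j)) \<longrightarrow>
        (AE \<omega> in M. \<forall>k. Sstar g (V \<omega>) $ k =
            (\<Sum>j<J. cond_exp_given M V MV (\<lambda>\<omega>'. \<nu> j (Y \<omega>') $ k * g j (Z j \<omega>')) \<omega>)))"
proof -
  interpret cond_exp_operator_family M Y MY V MV Z MZ S \<nu> J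
  proof (rule cond_exp_operator_family.intro[OF prob cond_exp_operator_family_axioms.intro[OF V_meas]])
    fix j assume j: "j < J"
    show "cond_exp_operator M Y MY V MV (Z j) (MZ j) (S j) (\<nu> j)"
      by (rule cond_exp_operator.intro[OF prob cond_exp_operator_axioms.intro])
         (use Y_meas V_meas Z_meas[OF j] diff_eta0[OF j] \<nu>_meas[OF j] \<nu>_g_int[OF j] S_cond[OF j]
          in \<open>auto simp: frechet_L2_def\<close>)
  qed
  show ?thesis
    using L2_adjoint integral_adjoint adjoint_lincomb adjoint_bounded adjoint_cond_exp
    by (intro exI[of _ adjoint] conjI allI impI) blast+
qed

end
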